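(* Let $\theta=(\gamma,\mu,\sigma)\in\mathbb{R}\times\mathbb{R}\times(0,\infty)$ and $x\in\mathbb{R}$ with $1+\gamma z>0$, where $z=(x-\mu)/\sigma$, and let $u=u_\gamma(z)$. Then \[|\partial_\mu\ell_\theta(x)|\le\begin{cases}\sigma^{-1}(1+|\gamma|)\,u^{1+\gamma}&\text{if }z\le0,\\ \sigma^{-1}(1+|\gamma|)\,u^{\gamma}&\text{if }z\ge0.\end{cases}\]
   Context: $u_\gamma(z)=(1+\gamma z)^{-1/\gamma}$ for $\gamma\ne0$ and $e^{-z}$ for $\gamma=0$. $\ell_\theta(x)=\log p_\theta(x)=-\log\sigma-u+(\gamma+1)\log u$ is the GEV log-density on $\{1+\gamma z>0\}$ (the GEV density being $p_\theta(x)=\sigma^{-1}e^{-u}u^{\gamma+1}\mathbf 1(1+\gamma z>0)$); its partial derivative in $\mu$ is $\partial_\mu\ell_\theta(x)=\frac{\gamma+1-u}{\sigma(1+\gamma z)}$. *)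

theory Defs
  imports "HOL-Analysis.Analysis"
begin

definition gev_u :: "real \<Rightarrow> real \<Rightarrow> real" where
  "gev_u \<gamma> z = (if \<gamma> = 0 then exp (- z) else (1 + \<gamma> * z) powr (- 1 / \<gamma>))"

definition gev_loglik :: "real \<Rightarrow> real \<Rightarrow> real \<Rightarrow> real \<Rightarrow> real" where
  "gev_loglik \<gamma> \<mu> \<sigma> x =
     (let u = gev_u \<gamma> ((x - \<mu>) / \<sigma>) in - ln \<sigma> - u + (\<gamma> + 1) * ln u)"

end

(* With z = (x - mu)/sigma and u = u_gamma(z), the chain rule and du/dz = -u/(1 + gamma z) give
   d ell/d mu = (gamma + 1 - u)/(sigma (1 + gamma z)) = (gamma + 1 - u) u^gamma / sigma,
   because u^gamma = 1/(1 + gamma z). Since ln u = -ln(1 + gamma z)/gamma has the sign of -z, we have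
   u >= 1 for z <= 0, where |gamma + 1 - u| <= (1 + |gamma|) u, and 0 < u <= 1 for z >= 0,
   where |gamma + 1 - u| <= 1 + |gamma|. *)
theory Submission
  imports Defs
begin

lemma gev_u_pos: "1 + \<gamma> * z > 0 \<Longrightarrow> gev_u \<gamma> z > 0"
  by (simp add: gev_u_def)

lemma gev_u_powr_eq_inverse:
  assumes "1 + \<gamma> * z > 0"
  shows "gev_u \<gamma> z powr \<gamma> = 1 / (1 + \<gamma> * z)"
proof (cases "\<gamma> = 0")
  case False
  then have "gev_u \<gamma> z powr \<gamma> = (1 + \<gamma> * z) powr (-1)"
    using assms by (simp add: gev_u_def powr_powr)
  then show ?thesis
    using assms by (simp add: powr_minus_divide)
qed (simp add: gev_u_def)

lemma ln_gev_u:
  assumes "1 + \<gamma> * z > 0" and "\<gamma> \<noteq> 0"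
  shows "ln (gev_u \<gamma> z) = - ln (1 + \<gamma> * z) / \<gamma>"
  using assms by (simp add: gev_u_def ln_powr)

lemma one_le_gev_u_iff:
  assumes "1 + \<gamma> * z > 0"
  shows "1 \<le> gev_u \<gamma> z \<longleftrightarrow> z \<le> 0"
proof (cases "\<gamma> = 0")
  case False
  have "1 \<le> gev_u \<gamma> z \<longleftrightarrow> ln (1 + \<gamma> * z) / \<gamma> \<le> 0"
    using gev_u_pos[OF assms] ln_gev_u[OF assms False] by (simp flip: ln_ge_zero_iff)
  also have "\<dots> \<longleftrightarrow> z \<le> 0"
    using assms False by (auto simp: divide_le_0_iff zero_le_mult_iff mult_le_0_iff)
  finally show ?thesis .
qed (simp add: gev_u_def)

lemma gev_u_le_one_iff:
  assumes "1 + \<gamma> * z > 0"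
  shows "gev_u \<gamma> z \<le> 1 \<longleftrightarrow> 0 \<le> z"
proof (cases "\<gamma> = 0")
  case False
  have "gev_u \<gamma> z \<le> 1 \<longleftrightarrow> 0 \<le> ln (1 + \<gamma> * z) / \<gamma>"
    using gev_u_pos[OF assms] ln_gev_u[OF assms False] by (simp flip: ln_le_zero_iff)
  also have "\<dots> \<longleftrightarrow> 0 \<le> z"
    using assms False by (auto simp: zero_le_divide_iff zero_le_mult_iff mult_le_0_iff)
  finally show ?thesis .
qed (simp add: gev_u_def)

lemma has_real_derivative_gev_u:
  assumes "1 + \<gamma> * z > 0"
  shows "(gev_u \<gamma> has_real_derivative - gev_u \<gamma> z / (1 + \<gamma> * z)) (at z)"
proof (cases "\<gamma> = 0")
  case True
  show ?thesis
    unfolding True gev_u_def by (auto intro!: derivative_eq_intros)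
next
  case False
  have "gev_u \<gamma> = (\<lambda>w. (1 + \<gamma> * w) powr (- 1 / \<gamma>))"
    using False by (simp add: gev_u_def fun_eq_iff)
  moreover have "((\<lambda>w. (1 + \<gamma> * w) powr (- 1 / \<gamma>)) has_real_derivative
      - ((1 + \<gamma> * z) powr (- 1 / \<gamma>)) / (1 + \<gamma> * z)) (at z)"
    using assms False by (auto intro!: derivative_eq_intros simp: powr_diff)
  ultimately show ?thesis
    by (simp add: gev_u_def False)
qed

lemma has_real_derivative_gev_loglik_location:
  fixes \<gamma> \<mu> \<sigma> x :: real
  defines "z \<equiv> (x - \<mu>) / \<sigma>"
  assumes "\<sigma> > 0" and "1 + \<gamma> * z > 0"
  shows "((\<lambda>m. gev_loglik \<gamma> m \<sigma> x) has_real_derivative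
           (\<gamma> + 1 - gev_u \<gamma> z) / (\<sigma> * (1 + \<gamma> * z))) (at \<mu>)"
proof -
  define U where "U = (\<lambda>m. gev_u \<gamma> ((x - m) / \<sigma>))"
  define u' where "u' = U \<mu> / (\<sigma> * (1 + \<gamma> * z))"
  have "((\<lambda>m. (x - m) / \<sigma>) has_real_derivative - 1 / \<sigma>) (at \<mu>)"
    using assms(2) by (auto intro!: derivative_eq_intros)
  from DERIV_chain2[OF has_real_derivative_gev_u[OF assms(3), unfolded z_def] this]
  have "(U has_real_derivative u') (at \<mu>)"
    by (simp add: U_def u'_def z_def mult.commute)
  moreover have "U \<mu> > 0"
    using gev_u_pos[OF assms(3)] by (simp add: U_def z_def)
  ultimately have "((\<lambda>m. - ln \<sigma> - U m + (\<gamma> + 1) * ln (U m)) has_real_derivative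
      - u' + (\<gamma> + 1) * (u' / U \<mu>)) (at \<mu>)"
    by (auto intro!: derivative_eq_intros)
  moreover have "- u' + (\<gamma> + 1) * (u' / U \<mu>) = (\<gamma> + 1 - U \<mu>) / (\<sigma> * (1 + \<gamma> * z))"
    using \<open>U \<mu> > 0\<close> by (simp add: u'_def diff_divide_distrib add_divide_distrib)
  ultimately show ?thesis
    by (simp add: gev_loglik_def Let_def U_def z_def)
qed

lemma deriv_gev_loglik_location:
  fixes \<gamma> \<mu> \<sigma> x :: real
  defines "z \<equiv> (x - \<mu>) / \<sigma>"
  assumes "\<sigma> > 0" and "1 + \<gamma> * z > 0"
  shows "deriv (\<lambda>m. gev_loglik \<gamma> m \<sigma> x) \<mu>
           = (\<gamma> + 1 - gev_u \<gamma> z) * gev_u \<gamma> z powr \<gamma> / \<sigma>"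
  using DERIV_imp_deriv[OF has_real_derivative_gev_loglik_location[OF assms(2,3)[unfolded z_def]]]
    gev_u_powr_eq_inverse[OF assms(3)]
  by (simp add: z_def)

lemma abs_add_one_diff_le_of_one_le:
  fixes \<gamma> u :: real
  assumes "1 \<le> u"
  shows "\<bar>\<gamma> + 1 - u\<bar> \<le> (1 + \<bar>\<gamma>\<bar>) * u"
proof -
  have "\<bar>\<gamma>\<bar> \<le> \<bar>\<gamma>\<bar> * u"
    using assms by (simp add: mult_le_cancel_left1)
  then show ?thesis
    using assms by (auto simp: abs_le_iff algebra_simps)
qed

lemma abs_add_one_diff_le_of_le_one:
  fixes \<gamma> u :: real
  assumes "0 < u" and "u \<le> 1"
  shows "\<bar>\<gamma> + 1 - u\<bar> \<le> 1 + \<bar>\<gamma>\<bar>"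
  using assms by (auto simp: abs_if)

theorem lemmaB2:
  fixes \<gamma> \<mu> \<sigma> x :: real
  assumes "\<sigma> > 0"
    and "1 + \<gamma> * ((x - \<mu>) / \<sigma>) > 0"
  shows "let z = (x - \<mu>) / \<sigma>; u = gev_u \<gamma> z;
             d = deriv (\<lambda>m. gev_loglik \<gamma> m \<sigma> x) \<mu> in
           (z \<le> 0 \<longrightarrow> \<bar>d\<bar> \<le> (1 + \<bar>\<gamma>\<bar>) * u powr (1 + \<gamma>) / \<sigma>) \<and>
           (z \<ge> 0 \<longrightarrow> \<bar>d\<bar> \<le> (1 + \<bar>\<gamma>\<bar>) * u powr \<gamma> / \<sigma>)"
proof -
  define z where "z = (x - \<mu>) / \<sigma>"
  define u where "u = gev_u \<gamma> z"
  have supp: "1 + \<gamma> * z > 0"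
    using assms(2) by (simp add: z_def)
  have "u > 0"
    using gev_u_pos[OF supp] by (simp add: u_def)
  have d: "\<bar>deriv (\<lambda>m. gev_loglik \<gamma> m \<sigma> x) \<mu>\<bar> = \<bar>\<gamma> + 1 - u\<bar> * u powr \<gamma> / \<sigma>"
    using deriv_gev_loglik_location[OF assms] assms(1)
    by (simp add: u_def z_def abs_mult)
  have "\<bar>\<gamma> + 1 - u\<bar> * u powr \<gamma> / \<sigma> \<le> (1 + \<bar>\<gamma>\<bar>) * u powr (1 + \<gamma>) / \<sigma>" if "z \<le> 0"
    using abs_add_one_diff_le_of_one_le[of u \<gamma>] one_le_gev_u_iff[OF supp] that \<open>u > 0\<close> assms(1)
    by (simp add: u_def powr_add divide_right_mono mult_right_mono mult.assoc)
  moreover have "\<bar>\<gamma> + 1 - u\<bar> * u powr \<gamma> / \<sigma> \<le> (1 + \<bar>\<gamma>\<bar>) * u powr \<gamma> / \<sigma>" if "z \<ge> 0"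
    using abs_add_one_diff_le_of_le_one[of u \<gamma>] gev_u_le_one_iff[OF supp] that \<open>u > 0\<close> assms(1)
    by (simp add: u_def divide_right_mono mult_right_mono)
  ultimately show ?thesis
    by (simp add: Let_def d flip: z_def u_def)
qed

end
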